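(* For every pair of integers $a,b$ with $2\leq a\leq b$, there exists a connected graph $G$ of some order $n\ge 3$ such that $px_k(G)=a$ and $rx_k(G)=b$ for each integer $k$ with $3\leq k\leq n$.
   Context: All graphs are finite, simple, undirected and connected. An edge-coloring of a graph assigns a color to each edge (adjacent edges may receive the same color). A tree in an edge-colored graph is proper if any two adjacent edges of the tree receive different colors, and rainbow if no two of its edges receive the same color. For $S\subseteq V(G)$, an $S$-tree is a subgraph of $G$ that is a tree containing all vertices of $S$. For a connected graph $G$ of order $n$ and an integer $k$ with $2\le k\le n$, an edge-coloring of $G$ is a $k$-proper coloring (resp. $k$-rainbow coloring) if for every set $S$ of $k$ vertices of $G$ there exists a proper (resp. rainbow) $S$-tree in $G$. The $k$-proper index $px_k(G)$ (resp. $k$-rainbow index $rx_k(G)$) is the minimum number of colors used in a $k$-proper coloring (resp. $k$-rainbow coloring) of $G$. *)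

theory Defs
  imports Main
begin

definition simple_graph :: "'a set \<Rightarrow> 'a set set \<Rightarrow> bool" where
  "simple_graph V E \<longleftrightarrow> finite V \<and>
     (\<forall>e\<in>E. \<exists>u v. u \<noteq> v \<and> u \<in> V \<and> v \<in> V \<and> e = {u, v})"

definition adj_rel :: "'a set set \<Rightarrow> ('a \<times> 'a) set" where
  "adj_rel E = {(x, y). {x, y} \<in> E \<and> x \<noteq> y}"

definition graph_connected :: "'a set \<Rightarrow> 'a set set \<Rightarrow> bool" where
  "graph_connected V E \<longleftrightarrow> (\<forall>u\<in>V. \<forall>v\<in>V. (u, v) \<in> (adj_rel E)\<^sup>*)"

definition is_cycle :: "'a set set \<Rightarrow> 'a list \<Rightarrow> bool" where
  "is_cycle E vs \<longleftrightarrow> length vs \<ge> 3 \<and> distinct vs \<and>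
     (\<forall>i < length vs. {vs ! i, vs ! ((i + 1) mod length vs)} \<in> E)"

definition acyclic_graph :: "'a set set \<Rightarrow> bool" where
  "acyclic_graph E \<longleftrightarrow> \<not> (\<exists>vs. is_cycle E vs)"

definition is_subtree :: "'a set \<Rightarrow> 'a set set \<Rightarrow> 'a set \<Rightarrow> 'a set set \<Rightarrow> bool" where
  "is_subtree V E VT ET \<longleftrightarrow> VT \<subseteq> V \<and> ET \<subseteq> E \<and> VT \<noteq> {} \<and>
     (\<forall>e\<in>ET. e \<subseteq> VT) \<and> graph_connected VT ET \<and> acyclic_graph ET"

definition proper_tree :: "('a set \<Rightarrow> nat) \<Rightarrow> 'a set set \<Rightarrow> bool" where
  "proper_tree c ET \<longleftrightarrow> (\<forall>e\<in>ET. \<forall>f\<in>ET. e \<noteq> f \<and> e \<inter> f \<noteq> {} \<longrightarrow> c e \<noteq> c f)"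

definition rainbow_tree :: "('a set \<Rightarrow> nat) \<Rightarrow> 'a set set \<Rightarrow> bool" where
  "rainbow_tree c ET \<longleftrightarrow> inj_on c ET"

definition k_proper_coloring :: "nat \<Rightarrow> 'a set \<Rightarrow> 'a set set \<Rightarrow> ('a set \<Rightarrow> nat) \<Rightarrow> bool" where
  "k_proper_coloring k V E c \<longleftrightarrow>
     (\<forall>S. S \<subseteq> V \<and> card S = k \<longrightarrow>
        (\<exists>VT ET. is_subtree V E VT ET \<and> S \<subseteq> VT \<and> proper_tree c ET))"

definition k_rainbow_coloring :: "nat \<Rightarrow> 'a set \<Rightarrow> 'a set set \<Rightarrow> ('a set \<Rightarrow> nat) \<Rightarrow> bool" where
  "k_rainbow_coloring k V E c \<longleftrightarrow>
     (\<forall>S. S \<subseteq> V \<and> card S = k \<longrightarrow>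
        (\<exists>VT ET. is_subtree V E VT ET \<and> S \<subseteq> VT \<and> rainbow_tree c ET))"

definition proper_index :: "nat \<Rightarrow> 'a set \<Rightarrow> 'a set set \<Rightarrow> nat" where
  "proper_index k V E = (LEAST m. \<exists>c. k_proper_coloring k V E c \<and> card (c ` E) = m)"

definition rainbow_index :: "nat \<Rightarrow> 'a set \<Rightarrow> 'a set set \<Rightarrow> nat" where
  "rainbow_index k V E = (LEAST m. \<exists>c. k_rainbow_coloring k V E c \<and> card (c ` E) = m)"

end

theory Submission imports Defs begin

text \<open>The graph is the broom: the star with centre \<open>0\<close> and leaves \<open>1, ..., a\<close>, with the path
  \<open>a, a+1, ..., b\<close> attached at the leaf \<open>a\<close>; it is a tree with \<open>b\<close> edges.  In a tree,
  every subtree containing the root and a vertex \<open>j\<close> contains the edge from \<open>j\<close> to its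
  parent, so for \<open>k \<ge> 3\<close> any two edges lie in a common \<open>S\<close>-tree (take \<open>S \<supseteq> {0, i, j}\<close>).
  Hence a \<open>k\<close>-rainbow colouring is injective on all \<open>b\<close> edges and a \<open>k\<close>-proper colouring
  is injective on the \<open>a\<close> edges at the root.  Conversely, the whole tree is a rainbow tree
  when all edges get distinct colours, and a proper one when the star edges get the colours
  \<open>1, ..., a\<close> and the path edges alternately \<open>1\<close> and \<open>a\<close>.\<close>

definition k_steiner_trees :: "('a set set \<Rightarrow> bool) \<Rightarrow> nat \<Rightarrow> 'a set \<Rightarrow> 'a set set \<Rightarrow> bool" where
  "k_steiner_trees Q k V E \<longleftrightarrow>
     (\<forall>S. S \<subseteq> V \<and> card S = k \<longrightarrow> (\<exists>VT ET. is_subtree V E VT ET \<and> S \<subseteq> VT \<and> Q ET))"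

lemma k_proper_coloring_eq: "k_proper_coloring k V E c = k_steiner_trees (proper_tree c) k V E"
  by (simp add: k_proper_coloring_def k_steiner_trees_def)

lemma k_rainbow_coloring_eq: "k_rainbow_coloring k V E c = k_steiner_trees (rainbow_tree c) k V E"
  by (simp add: k_rainbow_coloring_def k_steiner_trees_def)

lemma k_steiner_trees_whole_tree:
  assumes "is_subtree V E V E" "Q E"
  shows "k_steiner_trees Q k V E"
  using assms by (auto simp: k_steiner_trees_def)

lemma k_steiner_treesD:
  assumes "k_steiner_trees Q k V E" "finite V" "T \<subseteq> V" "card T \<le> k" "k \<le> card V"
  obtains VT ET where "is_subtree V E VT ET" "T \<subseteq> VT" "Q ET"
proof -
  obtain S where S: "T \<subseteq> S" "S \<subseteq> V" "card S = k"
    using exists_subset_between[OF assms(4,5,3,2)] by blast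
  then obtain VT ET where "is_subtree V E VT ET" "S \<subseteq> VT" "Q ET"
    using assms(1) unfolding k_steiner_trees_def by blast
  with S(1) show ?thesis
    using that by blast
qed

lemma proper_index_eqI:
  assumes "k_proper_coloring k V E c" "card (c ` E) = m"
    and "\<And>c. k_proper_coloring k V E c \<Longrightarrow> m \<le> card (c ` E)"
  shows "proper_index k V E = m"
  unfolding proper_index_def using assms by (intro Least_equality) auto

lemma rainbow_index_eqI:
  assumes "k_rainbow_coloring k V E c" "card (c ` E) = m"
    and "\<And>c. k_rainbow_coloring k V E c \<Longrightarrow> m \<le> card (c ` E)"
  shows "rainbow_index k V E = m"
  unfolding rainbow_index_def using assms by (intro Least_equality) auto

lemma rtrancl_adj_rel_leaves_set:
  assumes "(x, y) \<in> (adj_rel E)\<^sup>*" "x \<in> D" "y \<notin> D"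
  shows "\<exists>u v. {u, v} \<in> E \<and> u \<in> D \<and> v \<notin> D"
  using assms
proof (induction rule: rtrancl_induct)
  case (step y z)
  then show ?case
    by (cases "y \<in> D") (auto simp: adj_rel_def)
qed simp

lemma subtree_contains_bridge:
  assumes "is_subtree V E VT ET" "x \<in> VT" "y \<in> VT" "x \<in> D" "y \<notin> D"
    and bridge: "\<And>u v. {u, v} \<in> E \<Longrightarrow> u \<in> D \<Longrightarrow> v \<notin> D \<Longrightarrow> {u, v} = e"
  shows "e \<in> ET"
proof -
  have path: "(x, y) \<in> (adj_rel ET)\<^sup>*" and sub: "ET \<subseteq> E"
    using assms(1-3) by (auto simp: is_subtree_def graph_connected_def)
  obtain u v where "{u, v} \<in> ET" "u \<in> D" "v \<notin> D"
    using rtrancl_adj_rel_leaves_set[OF path assms(4,5)] by blast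
  then show ?thesis
    using bridge sub by blast
qed

locale parent_tree =
  fixes p :: "nat \<Rightarrow> nat"
  assumes parent_less: "0 < j \<Longrightarrow> p j < j"
begin

definition edges :: "nat \<Rightarrow> nat set set" where
  "edges n = (\<lambda>j. {p j, j}) ` {1..n}"

definition parent_rel :: "(nat \<times> nat) set" where
  "parent_rel = {(x, p x) | x. 0 < x}"

definition descendants :: "nat \<Rightarrow> nat set" where
  "descendants j = {v. (v, j) \<in> parent_rel\<^sup>*}"

lemma mem_edges_iff: "e \<in> edges n \<longleftrightarrow> (\<exists>j. 0 < j \<and> j \<le> n \<and> e = {p j, j})"
  by (auto simp: edges_def Suc_le_eq)

lemma max_parent [simp]: "0 < j \<Longrightarrow> max (p j) j = j"
  using parent_less[of j] by simp

lemma inj_on_edge: "inj_on (\<lambda>j. {p j, j}) {1..n}"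
  by (rule inj_on_inverseI[where g = Max]) (simp add: Suc_le_eq)

lemma card_edges: "card (edges n) = n"
  unfolding edges_def using inj_on_edge by (simp add: card_image)

lemma inj_on_Max_edges: "inj_on Max (edges n)"
  by (intro inj_onI) (auto simp: mem_edges_iff)

lemma image_Max_edges: "(\<lambda>e. f (Max e)) ` edges n = f ` {1..n}"
  unfolding edges_def image_image by (intro image_cong) (auto simp: Suc_le_eq)

lemma simple_graph_edges: "simple_graph {0..n} (edges n)"
  unfolding simple_graph_def
proof (intro conjI ballI)
  fix e assume "e \<in> edges n"
  then obtain j where "0 < j" "j \<le> n" "e = {p j, j}"
    by (auto simp: mem_edges_iff)
  then show "\<exists>u v. u \<noteq> v \<and> u \<in> {0..n} \<and> v \<in> {0..n} \<and> e = {u, v}"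
    using parent_less[of j] by (intro exI[of _ "p j"] exI[of _ j]) auto
qed simp

lemma root_reachable: "j \<le> n \<Longrightarrow> (j, 0) \<in> (adj_rel (edges n))\<^sup>*"
proof (induction j rule: less_induct)
  case (less j)
  show ?case
  proof (cases "j = 0")
    case False
    then have "(j, p j) \<in> adj_rel (edges n)"
      using less.prems parent_less[of j] by (auto simp: adj_rel_def edges_def insert_commute)
    moreover have "(p j, 0) \<in> (adj_rel (edges n))\<^sup>*"
      using less False parent_less[of j] by simp
    ultimately show ?thesis by (rule converse_rtrancl_into_rtrancl)
  qed simp
qed

lemma graph_connected_edges: "graph_connected {0..n} (edges n)"
proof -
  have "sym ((adj_rel (edges n))\<^sup>*)"
    by (intro sym_rtrancl) (auto simp: sym_def adj_rel_def insert_commute)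
  then show ?thesis
    unfolding graph_connected_def using root_reachable
    by (meson atLeastAtMost_iff rtrancl_trans symD)
qed

text \<open>The largest vertex of a cycle would have two distinct smaller neighbours, but its only
  smaller neighbour is its parent.\<close>

lemma acyclic_edges: "acyclic_graph (edges n)"
  unfolding acyclic_graph_def
proof
  assume "\<exists>vs. is_cycle (edges n) vs"
  then obtain vs where "is_cycle (edges n) vs" by blast
  then have len: "length vs \<ge> 3" and dist: "distinct vs"
    and cyc: "\<And>i. i < length vs \<Longrightarrow> {vs ! i, vs ! ((i + 1) mod length vs)} \<in> edges n"
    by (auto simp: is_cycle_def)
  define l where "l = length vs"
  have below_parent: "x = p y" if xy: "{x, y} \<in> edges n" "x < y" for x y
  proof -
    obtain j where "0 < j" "j \<le> n" "{x, y} = {p j, j}"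
      using xy(1) by (auto simp: mem_edges_iff)
    then show ?thesis
      using xy(2) parent_less[of j] by (auto simp: doubleton_eq_iff)
  qed
  have "Max (set vs) \<in> set vs"
    using len by (intro Max_in) auto
  then obtain m where m: "m < l" "vs ! m = Max (set vs)"
    by (auto simp: in_set_conv_nth l_def)
  have top: "vs ! i \<le> vs ! m" if "i < l" for i
    using that m(2) by (simp add: l_def)
  define m0 where "m0 = (if m = 0 then l - 1 else m - 1)"
  define m1 where "m1 = (if m = l - 1 then 0 else m + 1)"
  have idx: "m0 < l" "m1 < l" "(m0 + 1) mod l = m" "(m + 1) mod l = m1"
    "m0 \<noteq> m" "m1 \<noteq> m" "m0 \<noteq> m1"
    using m(1) len by (auto simp: m0_def m1_def l_def[symmetric])
  have neq: "vs ! m0 \<noteq> vs ! m" "vs ! m1 \<noteq> vs ! m" "vs ! m0 \<noteq> vs ! m1"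
    using idx m(1) dist by (simp_all add: nth_eq_iff_index_eq l_def)
  have "{vs ! m0, vs ! m} \<in> edges n" "{vs ! m1, vs ! m} \<in> edges n"
    using cyc[of m0] cyc[of m] idx m(1) by (simp_all add: l_def insert_commute)
  moreover have "vs ! m0 < vs ! m" "vs ! m1 < vs ! m"
    using top[of m0] top[of m1] idx neq by simp_all
  ultimately have "vs ! m0 = p (vs ! m)" "vs ! m1 = p (vs ! m)"
    using below_parent by blast+
  with neq(3) show False
    by simp
qed

lemma is_tree: "is_subtree {0..n} (edges n) {0..n} (edges n)"
proof -
  have "\<forall>e \<in> edges n. e \<subseteq> {0..n}"
  proof
    fix e assume "e \<in> edges n"
    then obtain j where "0 < j" "j \<le> n" "e = {p j, j}"
      by (auto simp: mem_edges_iff)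
    then show "e \<subseteq> {0..n}"
      using parent_less[of j] by auto
  qed
  then show ?thesis
    using graph_connected_edges acyclic_edges by (simp add: is_subtree_def)
qed

lemma root_not_descendant:
  assumes "0 < j"
  shows "0 \<notin> descendants j"
proof
  assume "0 \<in> descendants j"
  then have "(0, j) \<in> parent_rel\<^sup>*"
    by (simp add: descendants_def)
  then show False
    using assms by (cases rule: converse_rtranclE) (auto simp: parent_rel_def)
qed

lemma edge_leaving_descendants:
  assumes "0 < j" "{u, v} \<in> edges n" "u \<in> descendants j" "v \<notin> descendants j"
  shows "{u, v} = {p j, j}"
proof -
  obtain i where i: "0 < i" "{u, v} = {p i, i}"
    using assms(2) by (auto simp: mem_edges_iff)
  have step: "(i, p i) \<in> parent_rel"
    using i by (auto simp: parent_rel_def)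
  then have "u = i \<and> v = p i"
    using i(2) assms(3,4) unfolding descendants_def
    by (auto simp: doubleton_eq_iff intro: converse_rtrancl_into_rtrancl)
  moreover have "(i, j) \<in> parent_rel\<^sup>* \<Longrightarrow> (p i, j) \<notin> parent_rel\<^sup>* \<Longrightarrow> i = j"
    by (erule converse_rtranclE) (auto simp: parent_rel_def)
  ultimately show ?thesis
    using assms(3,4) i(2) by (simp add: descendants_def)
qed

lemma subtree_contains_parent_edge:
  assumes "is_subtree {0..n} (edges n) VT ET" "0 \<in> VT" "j \<in> VT" "0 < j"
  shows "{p j, j} \<in> ET"
proof (rule subtree_contains_bridge[OF assms(1,3,2)])
  show "j \<in> descendants j" "0 \<notin> descendants j"
    using root_not_descendant[OF assms(4)] by (simp_all add: descendants_def)
qed (rule edge_leaving_descendants[OF assms(4)])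

lemma steiner_tree_through_edges:
  assumes "k_steiner_trees Q k {0..n} (edges n)" "3 \<le> k" "k \<le> Suc n"
    and "0 < i" "i \<le> n" "0 < j" "j \<le> n"
  obtains ET where "Q ET" "{p i, i} \<in> ET" "{p j, j} \<in> ET"
proof -
  have "{0, i, j} \<subseteq> {0..n}"
    using assms(5,7) by simp
  moreover have "card {0, i, j} \<le> k"
    using assms(2) by (simp add: card_insert_if)
  moreover have "k \<le> card {0..n}"
    using assms(3) by simp
  ultimately obtain VT ET where T: "is_subtree {0..n} (edges n) VT ET" "{0, i, j} \<subseteq> VT" "Q ET"
    by (rule k_steiner_treesD[OF assms(1) finite_atLeastAtMost])
  have "{p i, i} \<in> ET" "{p j, j} \<in> ET"
    using subtree_contains_parent_edge[OF T(1)] T(2) assms(4,6) by simp_all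
  with T(3) show ?thesis
    by (rule that)
qed

lemma rainbow_coloring_inj_on:
  assumes "k_rainbow_coloring k {0..n} (edges n) c" "3 \<le> k" "k \<le> Suc n"
  shows "inj_on c (edges n)"
proof (rule inj_onI)
  fix e f assume "e \<in> edges n" "f \<in> edges n" and same_color: "c e = c f"
  then obtain i j where ij: "0 < i" "i \<le> n" "e = {p i, i}" "0 < j" "j \<le> n" "f = {p j, j}"
    unfolding mem_edges_iff by blast
  obtain ET where "rainbow_tree c ET" "e \<in> ET" "f \<in> ET"
    using steiner_tree_through_edges[OF assms(1)[unfolded k_rainbow_coloring_eq] assms(2,3)]
      ij by blast
  with same_color show "e = f"
    unfolding rainbow_tree_def by (blast dest: inj_onD)
qed

lemma rainbow_coloring_card_ge:
  assumes "k_rainbow_coloring k {0..n} (edges n) c" "3 \<le> k" "k \<le> Suc n"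
  shows "n \<le> card (c ` edges n)"
  using rainbow_coloring_inj_on[OF assms] by (simp add: card_image card_edges)

text \<open>The edges at the root pairwise meet in \<open>0\<close> and lie in a common \<open>S\<close>-tree.\<close>

lemma proper_coloring_card_ge:
  assumes "k_proper_coloring k {0..n} (edges n) c" "3 \<le> k" "k \<le> Suc n"
  shows "card {j \<in> {1..n}. p j = 0} \<le> card (c ` edges n)"
proof -
  let ?R = "{j \<in> {1..n}. p j = 0}"
  have "inj_on (\<lambda>j. c {0, j}) ?R"
  proof (rule inj_onI)
    fix i j assume "i \<in> ?R" "j \<in> ?R" and same_color: "c {0, i} = c {0, j}"
    then have ij: "0 < i" "i \<le> n" "p i = 0" "0 < j" "j \<le> n" "p j = 0"
      by auto
    obtain ET where ET: "proper_tree c ET" "{0, i} \<in> ET" "{0, j} \<in> ET"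
      using steiner_tree_through_edges[OF assms(1)[unfolded k_proper_coloring_eq] assms(2,3)]
        ij by metis
    have "{0, i} \<inter> {0, j} \<noteq> {}"
      by simp
    then have "{0, i} = {0, j}"
      using ET same_color unfolding proper_tree_def by metis
    then show "i = j"
      by (auto simp: doubleton_eq_iff)
  qed
  then have "card ?R = card ((\<lambda>j. c {0, j}) ` ?R)"
    by (simp add: card_image)
  also have "\<dots> \<le> card (c ` edges n)"
  proof (rule card_mono)
    show "(\<lambda>j. c {0, j}) ` ?R \<subseteq> c ` edges n"
    proof (rule image_subsetI)
      fix j assume "j \<in> ?R"
      then have "{0, j} = {p j, j}" "j \<in> {1..n}"
        by simp_all
      then have "{0, j} \<in> edges n"
        unfolding edges_def by (rule image_eqI)
      then show "c {0, j} \<in> c ` edges n"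
        by (rule imageI)
    qed
  qed (simp add: edges_def)
  finally show ?thesis .
qed

lemma card_Max_edges: "card (Max ` edges n) = n"
  using inj_on_Max_edges card_edges by (simp add: card_image)

lemma rainbow_coloring_Max: "k_rainbow_coloring k {0..n} (edges n) Max"
  unfolding k_rainbow_coloring_eq rainbow_tree_def
  using is_tree inj_on_Max_edges by (rule k_steiner_trees_whole_tree)

text \<open>Distinct edges \<open>{p i, i}\<close> and \<open>{p j, j}\<close> meet iff \<open>i\<close> and \<open>j\<close> are siblings or one
  is the parent of the other; \<open>Max e\<close> is the child endpoint of the edge \<open>e\<close>.\<close>

lemma proper_coloring_Max:
  assumes "\<And>i j. 0 < i \<Longrightarrow> 0 < j \<Longrightarrow> i \<noteq> j \<Longrightarrow> p i = p j \<or> p i = j \<or> p j = i \<Longrightarrow> f i \<noteq> f j"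
  shows "k_proper_coloring k {0..n} (edges n) (\<lambda>e. f (Max e))"
proof -
  have "proper_tree (\<lambda>e. f (Max e)) (edges n)"
    unfolding proper_tree_def
  proof (intro ballI impI)
    fix e e' assume "e \<in> edges n" "e' \<in> edges n" and meet: "e \<noteq> e' \<and> e \<inter> e' \<noteq> {}"
    then obtain i j where ij: "0 < i" "e = {p i, i}" "0 < j" "e' = {p j, j}"
      unfolding mem_edges_iff by blast
    with meet have "i \<noteq> j" "p i = p j \<or> p i = j \<or> p j = i"
      by auto
    then show "f (Max e) \<noteq> f (Max e')"
      using assms ij by simp
  qed
  then show ?thesis
    using is_tree by (simp add: k_proper_coloring_eq k_steiner_trees_whole_tree)
qed

end

definition broom_parent :: "nat \<Rightarrow> nat \<Rightarrow> nat" where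
  "broom_parent a j = (if j \<le> a then 0 else j - 1)"

definition broom_color :: "nat \<Rightarrow> nat \<Rightarrow> nat" where
  "broom_color a j = (if j \<le> a then j else if odd (j - a) then 1 else a)"

interpretation broom: parent_tree "broom_parent a" for a
  by unfold_locales (simp add: broom_parent_def)

lemma broom_root_children:
  assumes "0 < a" "a \<le> b"
  shows "{j \<in> {1..b}. broom_parent a j = 0} = {1..a}"
  using assms by (auto simp: broom_parent_def)

lemma broom_color_image:
  assumes "0 < a" "a \<le> b"
  shows "broom_color a ` {1..b} = {1..a}"
proof
  show "broom_color a ` {1..b} \<subseteq> {1..a}"
    using assms(1) by (auto simp: broom_color_def)
  show "{1..a} \<subseteq> broom_color a ` {1..b}"
  proof
    fix j assume "j \<in> {1..a}"
    then have "j = broom_color a j" "j \<in> {1..b}"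
      using assms(2) by (auto simp: broom_color_def)
    then show "j \<in> broom_color a ` {1..b}"
      by (rule image_eqI)
  qed
qed

lemma broom_color_Suc:
  assumes "2 \<le> a" "a \<le> j"
  shows "broom_color a (Suc j) \<noteq> broom_color a j"
proof (cases "j = a")
  case False
  then have "Suc j - a = Suc (j - a)"
    using assms(2) by simp
  then show ?thesis
    using assms False by (auto simp: broom_color_def)
qed (use assms in \<open>simp add: broom_color_def\<close>)

lemma broom_color_separates:
  assumes "2 \<le> a" "0 < i" "0 < j" "i \<noteq> j"
    and "broom_parent a i = broom_parent a j \<or> broom_parent a i = j \<or> broom_parent a j = i"
  shows "broom_color a i \<noteq> broom_color a j"
proof -
  consider "i \<le> a" "j \<le> a" | "i = Suc j" "a \<le> j" | "j = Suc i" "a \<le> i"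
    using assms by (auto simp: broom_parent_def split: if_splits)
  then show ?thesis
  proof cases
    case 1
    then show ?thesis
      using assms(4) by (simp add: broom_color_def)
  qed (use broom_color_Suc[OF assms(1)] in fastforce)+
qed

theorem mainTheorem14:
  fixes a b :: nat
  assumes "2 \<le> a" and "a \<le> b"
  shows "\<exists>(V :: nat set) E. simple_graph V E \<and> graph_connected V E \<and> card V \<ge> 3 \<and>
           (\<forall>k. 3 \<le> k \<and> k \<le> card V \<longrightarrow>
                proper_index k V E = a \<and> rainbow_index k V E = b)"
proof (intro exI conjI allI impI)
  let ?E = "broom.edges a b"
  show "simple_graph {0..b} ?E" "graph_connected {0..b} ?E" "3 \<le> card {0..b}"
    using broom.simple_graph_edges broom.graph_connected_edges assms by auto
  fix k assume "3 \<le> k \<and> k \<le> card {0..b}"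
  then have k: "3 \<le> k" "k \<le> Suc b" by auto
  show "proper_index k {0..b} ?E = a"
  proof (rule proper_index_eqI)
    show "k_proper_coloring k {0..b} ?E (\<lambda>e. broom_color a (Max e))"
      using broom.proper_coloring_Max broom_color_separates assms(1) by blast
    show "card ((\<lambda>e. broom_color a (Max e)) ` ?E) = a"
      using broom.image_Max_edges[of "broom_color a"] broom_color_image assms by simp
    show "a \<le> card (c ` ?E)" if "k_proper_coloring k {0..b} ?E c" for c
      using broom.proper_coloring_card_ge[OF that k] broom_root_children assms by simp
  qed
  show "rainbow_index k {0..b} ?E = b"
    using broom.rainbow_coloring_Max broom.card_Max_edges broom.rainbow_coloring_card_ge[OF _ k]
    by (rule rainbow_index_eqI)
qed

end
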